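(* $\mathrm{WM}\preceq F_{\mathrm{weak}}\preceq \mathrm{WL}_{3/2}$. That is, for all graphs $G,H$: if $\mathrm{WL}_{3/2}(G)=\mathrm{WL}_{3/2}(H)$ then $F_{\mathrm{weak}}(G)=F_{\mathrm{weak}}(H)$, and if $F_{\mathrm{weak}}(G)=F_{\mathrm{weak}}(H)$ then $\mathrm{WM}(G)=\mathrm{WM}(H)$.
   Context: Graphs are finite, simple and undirected; an $n$-vertex graph $G$ has $V(G)=\{1,\dots,n\}$ and adjacency matrix $A$. $\mathrm{Spec}(G)$ is the multiset of eigenvalues of $A$. Let $\mu_1<\dots<\mu_m$ be the distinct eigenvalues, $P_i$ the orthogonal projection matrix onto the eigenspace of $\mu_i$, $P_*(x,y)=(P_1(x,y),\dots,P_m(x,y))$. Fürer's weak spectral invariant is $F_{\mathrm{weak}}(G)=\big(\mathrm{Spec}(G),\{\!\{(P_*(x,x),\{\!\{P_*(x,y)\}\!\}_{y\in V(G)})\}\!\}_{x\in V(G)}\big)$, where $\{\!\{\cdot\}\!\}$ denotes a multiset. Let $w_k(x,y)$ be the number of walks of length $k$ from $x$ to $y$. The walk matrix has entries $W(x,k)=\sum_{y}w_k(x,y)$ for $0\le k\le n-1$, and $\mathrm{WM}(G)=\{\!\{(W(x,0),\dots,W(x,n-1))\}\!\}_{x\in V(G)}$. Color refinement (1-WL) on a vertex-colored graph: $C^0(x)$ is the color of $x$ (uniform if the graph is uncolored), and $C^{r+1}(x)=\big(C^r(x),\{\!\{C^r(y)\}\!\}_{y\in N(x)}\big)$, where $N(x)$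 is the neighborhood. $\mathrm{WL}_1(G)=\{\!\{C^n(x)\}\!\}_{x\in V(G)}$. For a vertex $x$, $G_x$ is $G$ with $x$ individualized, i.e. $x$ receives a special new color (the same special color for every choice of $x$) and the other vertices keep their colors. $\mathrm{WL}_{3/2}(G)=\{\!\{\mathrm{WL}_1(G_x)\}\!\}_{x\in V(G)}$. *)

theory Defs
  imports "Jordan_Normal_Form.Char_Poly" "HOL-Library.Multiset"
begin

text \<open>A finite simple undirected graph on n vertices is a pair (n, E) with vertex set
  {0..<n} and a symmetric irreflexive edge relation E living on the vertex set.
  (We index vertices 0..n-1 instead of 1..n; all invariants below are label-independent.)\<close>

type_synonym graph = "nat \<times> (nat \<Rightarrow> nat \<Rightarrow> bool)"

definition verts :: "graph \<Rightarrow> nat set" where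
  "verts G = {0..<fst G}"

definition adj :: "graph \<Rightarrow> nat \<Rightarrow> nat \<Rightarrow> bool" where
  "adj G x y = snd G x y"

definition is_graph :: "graph \<Rightarrow> bool" where
  "is_graph G \<longleftrightarrow>
     (\<forall>x y. adj G x y \<longrightarrow> x \<in> verts G \<and> y \<in> verts G) \<and>
     (\<forall>x y. adj G x y \<longrightarrow> adj G y x) \<and>
     (\<forall>x. \<not> adj G x x)"

definition nbrs :: "graph \<Rightarrow> nat \<Rightarrow> nat set" where
  "nbrs G x = {y \<in> verts G. adj G x y}"

definition adj_mat :: "graph \<Rightarrow> real mat" where
  "adj_mat G = mat (fst G) (fst G) (\<lambda>(i, j). if adj G i j then 1 else 0)"

definition Spec :: "graph \<Rightarrow> real multiset" where
  "Spec G = proots (char_poly (adj_mat G))"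

definition distinct_eigs :: "graph \<Rightarrow> real list" where
  "distinct_eigs G = sorted_list_of_set (set_mset (Spec G))"

definition eigenspace :: "graph \<Rightarrow> real \<Rightarrow> real vec set" where
  "eigenspace G \<mu> = {v \<in> carrier_vec (fst G). adj_mat G *\<^sub>v v = \<mu> \<cdot>\<^sub>v v}"

definition eig_proj :: "graph \<Rightarrow> real \<Rightarrow> real mat" where
  "eig_proj G \<mu> = (THE P. P \<in> carrier_mat (fst G) (fst G) \<and>
      (\<forall>v \<in> carrier_vec (fst G). P *\<^sub>v v \<in> eigenspace G \<mu> \<and>
         (\<forall>w \<in> eigenspace G \<mu>. (v - P *\<^sub>v v) \<bullet> w = 0)))"

definition Pstar :: "graph \<Rightarrow> nat \<Rightarrow> nat \<Rightarrow> real list" where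
  "Pstar G x y = map (\<lambda>\<mu>. eig_proj G \<mu> $$ (x, y)) (distinct_eigs G)"

definition F_weak :: "graph \<Rightarrow> real multiset \<times> (real list \<times> real list multiset) multiset" where
  "F_weak G = (Spec G,
     image_mset (\<lambda>x. (Pstar G x x, image_mset (\<lambda>y. Pstar G x y) (mset_set (verts G))))
       (mset_set (verts G)))"

definition walks :: "graph \<Rightarrow> nat \<Rightarrow> nat \<Rightarrow> nat \<Rightarrow> nat list set" where
  "walks G k x y = {p. length p = Suc k \<and> p ! 0 = x \<and> p ! k = y \<and> set p \<subseteq> verts G \<and>
                       (\<forall>i<k. adj G (p ! i) (p ! Suc i))}"

definition num_walks :: "graph \<Rightarrow> nat \<Rightarrow> nat \<Rightarrow> nat \<Rightarrow> nat" where
  "num_walks G k x y = card (walks G k x y)"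

definition W :: "graph \<Rightarrow> nat \<Rightarrow> nat \<Rightarrow> nat" where
  "W G x k = (\<Sum>y\<in>verts G. num_walks G k x y)"

definition WM :: "graph \<Rightarrow> nat list multiset" where
  "WM G = image_mset (\<lambda>x. map (W G x) [0..<fst G]) (mset_set (verts G))"

datatype color = Init nat | Refine color "color multiset"

fun cr_color :: "graph \<Rightarrow> (nat \<Rightarrow> nat) \<Rightarrow> nat \<Rightarrow> nat \<Rightarrow> color" where
  "cr_color G c 0 x = Init (c x)"
| "cr_color G c (Suc r) x =
     Refine (cr_color G c r x) (image_mset (cr_color G c r) (mset_set (nbrs G x)))"

definition WL1_col :: "graph \<Rightarrow> (nat \<Rightarrow> nat) \<Rightarrow> color multiset" where
  "WL1_col G c = image_mset (cr_color G c (fst G)) (mset_set (verts G))"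

definition WL1 :: "graph \<Rightarrow> color multiset" where
  "WL1 G = WL1_col G (\<lambda>_. 0)"

definition individualize :: "nat \<Rightarrow> nat \<Rightarrow> nat" where
  "individualize x = (\<lambda>y. if y = x then 1 else 0)"

definition WL_3_2 :: "graph \<Rightarrow> color multiset multiset" where
  "WL_3_2 G = image_mset (\<lambda>x. WL1_col G (individualize x)) (mset_set (verts G))"

end

theory Submission
  imports Defs "Jordan_Normal_Form.Schur_Decomposition"
begin

text \<open>With \<open>x\<close> individualised, the colour of \<open>y\<close> after \<open>r\<close> refinement rounds determines the
  numbers \<open>w\<^sub>k(x,y)\<close> of walks from \<open>x\<close> to \<open>y\<close> of every length \<open>k \<le> r\<close>.
  The adjacency matrix \<open>A\<close> is real symmetric, so every polynomial vanishing on its spectrum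
  annihilates it; hence the eigenprojection \<open>P\<^sub>\<mu>\<close> is \<open>L\<^sub>\<mu>(A)\<close> for the Lagrange basis polynomial
  \<open>L\<^sub>\<mu>\<close> on the distinct eigenvalues, and \<open>P\<^sub>\<mu>(x,y)\<close> is a fixed linear combination of the
  \<open>w\<^sub>k(x,y)\<close> with \<open>k \<le> n\<close>. The spectrum is determined by the power sums
  \<open>tr A\<^sup>k = \<Sum>\<^sub>x w\<^sub>k(x,x)\<close> for \<open>k \<le> 2n\<close>, and \<open>w\<^sub>j\<^sub>+\<^sub>l(x,x) = \<Sum>\<^sub>y w\<^sub>j(x,y) w\<^sub>l(x,y)\<close> reduces these
  to walks of length at most \<open>n\<close>. Conversely \<open>A\<^sup>k = \<Sum>\<^sub>\<mu> \<mu>\<^sup>k P\<^sub>\<mu>\<close>, so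
  \<open>W(x,k) = \<Sum>\<^sub>\<mu> \<mu>\<^sup>k \<Sum>\<^sub>y P\<^sub>\<mu>(x,y)\<close> can be read off from \<open>F\<^sub>w\<^sub>e\<^sub>a\<^sub>k\<close>.\<close>

lemma index_mult_mat_sum:
  assumes "A \<in> carrier_mat n m" "B \<in> carrier_mat m p" "i < n" "j < p"
  shows "(A * B) $$ (i, j) = (\<Sum>l<m. A $$ (i, l) * B $$ (l, j))"
  using assms by (auto simp: scalar_prod_def lessThan_atLeast0 intro!: sum.cong)

lemma index_mult_mat_vec_sum:
  assumes "A \<in> carrier_mat n m" "v \<in> carrier_vec m" "i < n"
  shows "(A *\<^sub>v v) $ i = (\<Sum>j<m. A $$ (i, j) * v $ j)"
  using assms by (auto simp: scalar_prod_def lessThan_atLeast0 intro!: sum.cong)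

lemma pow_mat_Suc_left:
  assumes A: "A \<in> carrier_mat n n"
  shows "A ^\<^sub>m Suc k = A * A ^\<^sub>m k"
proof (induction k)
  case 0
  show ?case using A by simp
next
  case (Suc k)
  have "A ^\<^sub>m Suc (Suc k) = (A * A ^\<^sub>m k) * A"
    using Suc by simp
  also have "\<dots> = A * A ^\<^sub>m Suc k"
    using A by (simp add: assoc_mult_mat[of _ n n _ n _ n])
  finally show ?case .
qed

lemma pow_mat_add:
  assumes A: "A \<in> carrier_mat n n"
  shows "A ^\<^sub>m (k + l) = A ^\<^sub>m k * A ^\<^sub>m l"
proof (induction l)
  case 0
  show ?case using A by simp
next
  case (Suc l)
  then show ?case
    using A by (simp add: assoc_mult_mat[of _ n n _ n _ n])
qed

lemma transpose_pow_mat: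
  fixes A :: "'a::comm_ring_1 mat"
  assumes A: "A \<in> carrier_mat n n"
  shows "transpose_mat (A ^\<^sub>m k) = transpose_mat A ^\<^sub>m k"
proof (induction k)
  case 0
  show ?case using A by simp
next
  case (Suc k)
  have "transpose_mat (A ^\<^sub>m Suc k) = transpose_mat A * transpose_mat (A ^\<^sub>m k)"
    by (simp add: transpose_mult[OF pow_carrier_mat[OF A] A])
  then show ?case
    using Suc pow_mat_Suc_left[of "transpose_mat A" n k] A by simp
qed

lemma smult_mult_mat_vec:
  fixes A :: "'a::comm_semiring_1 mat"
  assumes A: "A \<in> carrier_mat n m" and v: "v \<in> carrier_vec m"
  shows "(c \<cdot>\<^sub>m A) *\<^sub>v v = c \<cdot>\<^sub>v (A *\<^sub>v v)"
  using A v by (intro eq_vecI) (auto simp: scalar_prod_def sum_distrib_left mult.assoc)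

lemma eq_mat_mult_vecI:
  fixes P Q :: "'a::semiring_1 mat"
  assumes "P \<in> carrier_mat n m" "Q \<in> carrier_mat n m"
    and "\<And>v. v \<in> carrier_vec m \<Longrightarrow> P *\<^sub>v v = Q *\<^sub>v v"
  shows "P = Q"
proof (rule eq_matI)
  fix i j assume "i < dim_row Q" "j < dim_col Q"
  then show "P $$ (i, j) = Q $$ (i, j)"
    using assms(3)[of "unit_vec m j"] assms(1,2)
    by (metis carrier_matD index_mult_mat_vec index_row(1) scalar_prod_right_unit unit_vec_carrier)
qed (use assms in auto)

section \<open>Traces and triangularisation\<close>

definition mat_trace :: "'a::comm_ring_1 mat \<Rightarrow> 'a" where
  "mat_trace M = (\<Sum>i<dim_row M. M $$ (i, i))"

lemma mat_trace_mult_comm: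
  fixes A :: "'a::comm_ring_1 mat"
  assumes A: "A \<in> carrier_mat n m" and B: "B \<in> carrier_mat m n"
  shows "mat_trace (A * B) = mat_trace (B * A)"
proof -
  have "mat_trace (A * B) = (\<Sum>i<n. \<Sum>l<m. A $$ (i, l) * B $$ (l, i))"
    unfolding mat_trace_def using A by (intro sum.cong, simp_all add: index_mult_mat_sum[OF A B])
  also have "\<dots> = (\<Sum>l<m. \<Sum>i<n. B $$ (l, i) * A $$ (i, l))"
    by (subst sum.swap) (simp add: mult.commute)
  also have "\<dots> = mat_trace (B * A)"
    unfolding mat_trace_def using B by (intro sum.cong, simp_all add: index_mult_mat_sum[OF B A])
  finally show ?thesis .
qed

lemma mat_trace_similar:
  fixes B :: "'a::comm_ring_1 mat"
  assumes P: "P \<in> carrier_mat n n" and B: "B \<in> carrier_mat n n" and Q: "Q \<in> carrier_mat n n"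
    and QP: "Q * P = 1\<^sub>m n"
  shows "mat_trace (P * B * Q) = mat_trace B"
proof -
  have "mat_trace (P * B * Q) = mat_trace (Q * (P * B))"
    by (rule mat_trace_mult_comm[of _ n n]) (use P B Q in auto)
  also have "Q * (P * B) = B"
    using P B Q QP by (simp add: assoc_mult_mat[of _ n n _ n _ n, symmetric])
  finally show ?thesis .
qed

lemma upper_triangular_mult:
  fixes B :: "'a::comm_ring_1 mat"
  assumes B: "B \<in> carrier_mat n n" and C: "C \<in> carrier_mat n n"
    and uB: "upper_triangular B" and uC: "upper_triangular C"
  shows "upper_triangular (B * C)"
    and "i < n \<Longrightarrow> (B * C) $$ (i, i) = B $$ (i, i) * C $$ (i, i)"
proof -
  have vanish: "B $$ (i, l) * C $$ (l, j) = 0"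
    if "j \<le> i" "l < n" "i < n" "l \<noteq> i \<or> j \<noteq> i" for i j l
  proof (cases "l < i")
    case True
    then show ?thesis using uB B that by (simp add: upper_triangularD)
  next
    case False
    then have "j < l" using that by auto
    then show ?thesis using uC C that by (simp add: upper_triangularD)
  qed
  show "upper_triangular (B * C)"
  proof (rule upper_triangularI)
    fix i j assume "j < i" "i < dim_row (B * C)"
    then have "i < n" "j < n" using B by auto
    then show "(B * C) $$ (i, j) = 0"
      using \<open>j < i\<close> vanish[of j i] by (simp add: index_mult_mat_sum[OF B C])
  qed
  assume i: "i < n"
  have "(B * C) $$ (i, i) = (\<Sum>l<n. B $$ (i, l) * C $$ (l, i))"
    by (rule index_mult_mat_sum[OF B C i i])
  also have "\<dots> = B $$ (i, i) * C $$ (i, i)"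
    using i vanish[of i i] by (subst sum.remove[of _ i]) (auto intro!: sum.neutral)
  finally show "(B * C) $$ (i, i) = B $$ (i, i) * C $$ (i, i)" .
qed

lemma upper_triangular_pow:
  fixes B :: "'a::comm_ring_1 mat"
  assumes B: "B \<in> carrier_mat n n" and uB: "upper_triangular B"
  shows "upper_triangular (B ^\<^sub>m k) \<and> (\<forall>i<n. (B ^\<^sub>m k) $$ (i, i) = B $$ (i, i) ^ k)"
  by (induction k) (use B upper_triangular_mult[OF pow_carrier_mat[OF B] B _ uB] in auto)

lemma mat_trace_pow_char_poly_roots:
  fixes A :: "'a::conjugatable_ordered_field mat"
  assumes A: "A \<in> carrier_mat n n" and es: "char_poly A = (\<Prod>e\<leftarrow>es. [:- e, 1:])"
  shows "mat_trace (A ^\<^sub>m k) = (\<Sum>e\<leftarrow>es. e ^ k)"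
proof -
  obtain B P Q where BPQ: "schur_decomposition A es = (B, P, Q)"
    by (cases "schur_decomposition A es") auto
  from schur_decomposition[OF A es BPQ]
  have sim: "similar_mat_wit A B P Q" and uB: "upper_triangular B" and dB: "diag_mat B = es"
    by auto
  from similar_mat_witD2[OF A sim]
  have B: "B \<in> carrier_mat n n" and P: "P \<in> carrier_mat n n" and Q: "Q \<in> carrier_mat n n"
    and QP: "Q * P = 1\<^sub>m n"
    by auto
  have len: "length es = n"
    unfolding dB[symmetric] diag_mat_def using B by simp
  have "mat_trace (A ^\<^sub>m k) = mat_trace (B ^\<^sub>m k)"
    using similar_mat_wit_pow_id[OF sim] mat_trace_similar[OF P _ Q QP] B by simp
  also have "\<dots> = (\<Sum>i<n. (es ! i) ^ k)"
    using upper_triangular_pow[OF B uB, of k] B dB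
    by (auto simp: mat_trace_def diag_mat_def intro!: sum.cong)
  also have "\<dots> = (\<Sum>e\<leftarrow>es. e ^ k)"
    using len by (simp add: sum_list_sum_nth atLeast0LessThan)
  finally show ?thesis .
qed

section \<open>Real symmetric matrices\<close>

lemma real_symmetric_eigenvalue_real:
  fixes A :: "real mat"
  assumes A: "A \<in> carrier_mat n n" and sym: "transpose_mat A = A"
    and e: "poly (char_poly (map_mat complex_of_real A)) e = 0"
  shows "e \<in> \<real>"
proof -
  let ?AC = "map_mat complex_of_real A"
  have AC: "?AC \<in> carrier_mat n n" using A by simp
  obtain v where "eigenvector ?AC v e"
    using eigenvalue_root_char_poly[OF AC] e unfolding eigenvalue_def by blast
  then have v: "v \<in> carrier_vec n" and v0: "v \<noteq> 0\<^sub>v n" and ev: "?AC *\<^sub>v v = e \<cdot>\<^sub>v v"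
    using AC unfolding eigenvector_def by auto
  have ACt: "transpose_mat ?AC = ?AC"
    using A sym by (metis map_mat_transpose)
  have conj_AC: "conjugate (?AC *\<^sub>v v) = ?AC *\<^sub>v conjugate v"
  proof (rule eq_vecI)
    fix i assume "i < dim_vec (?AC *\<^sub>v conjugate v)"
    then have i: "i < n" using AC by simp
    show "conjugate (?AC *\<^sub>v v) $ i = (?AC *\<^sub>v conjugate v) $ i"
      using i AC v
      by (simp add: index_mult_mat_vec_sum[OF AC] sum_conjugate conjugate_dist_mul
          del: index_mult_mat_vec)
  qed (use AC in simp)
  have "e * (v \<bullet>c v) = (?AC *\<^sub>v v) \<bullet>c v"
    using v by (simp add: ev)
  also have "\<dots> = v \<bullet> (?AC *\<^sub>v conjugate v)"
    using transpose_vec_mult_scalar[OF AC, of "conjugate v" v] v ACt by simp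
  also have "\<dots> = cnj e * (v \<bullet>c v)"
    using v by (simp add: conj_AC[symmetric] ev conjugate_smult_vec)
  finally have "cnj e = e"
    using v v0 by simp
  then show ?thesis by (simp add: Reals_cnj_iff)
qed

lemma real_symmetric_char_poly_splits:
  fixes A :: "real mat"
  assumes A: "A \<in> carrier_mat n n" and sym: "transpose_mat A = A"
  obtains rs where "char_poly A = (\<Prod>r\<leftarrow>rs. [:- r, 1:])"
proof -
  interpret map_poly_inj_idom_hom "of_real :: real \<Rightarrow> complex" ..
  let ?AC = "map_mat complex_of_real A"
  obtain es where es: "char_poly ?AC = (\<Prod>e\<leftarrow>es. [:- e, 1:])"
    using char_poly_factorized[of ?AC n] A by auto
  have "e \<in> \<real>" if "e \<in> set es" for e
    using real_symmetric_eigenvalue_real[OF A sym] that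
    by (simp add: es poly_prod_list prod_list_zero_iff)
  then have es_Re: "es = map (complex_of_real \<circ> Re) es"
    by (intro nth_equalityI) auto
  have "map_poly complex_of_real (char_poly A) = map_poly complex_of_real (\<Prod>r\<leftarrow>map Re es. [:- r, 1:])"
    unfolding of_real_hom.char_poly_hom[OF A, symmetric] es
    by (subst es_Re) (simp add: hom_prod_list o_def)
  then have "char_poly A = (\<Prod>r\<leftarrow>map Re es. [:- r, 1:])"
    by (rule injectivity)
  then show ?thesis by (rule that)
qed

section \<open>Polynomials of a matrix\<close>

definition poly_mat :: "'a::comm_ring_1 poly \<Rightarrow> 'a mat \<Rightarrow> 'a mat" where
  "poly_mat p A = mat (dim_row A) (dim_row A)
     (\<lambda>(i, j). \<Sum>k\<le>degree p. coeff p k * (A ^\<^sub>m k) $$ (i, j))"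

lemma poly_mat_dim[simp]:
  "dim_row (poly_mat p A) = dim_row A" "dim_col (poly_mat p A) = dim_row A"
  by (simp_all add: poly_mat_def)

lemma poly_mat_carrier[simp]: "A \<in> carrier_mat n n \<Longrightarrow> poly_mat p A \<in> carrier_mat n n"
  by (simp add: poly_mat_def)

lemma index_poly_mat:
  assumes "A \<in> carrier_mat n n" "i < n" "j < n" "degree p < N"
  shows "poly_mat p A $$ (i, j) = (\<Sum>k<N. coeff p k * (A ^\<^sub>m k) $$ (i, j))"
  using assms by (auto simp: poly_mat_def intro!: sum.mono_neutral_left)
    (metis le_degree mult_zero_left)

lemma poly_mat_0: "A \<in> carrier_mat n n \<Longrightarrow> poly_mat 0 A = 0\<^sub>m n n"
  by (auto simp: poly_mat_def)

lemma poly_mat_add: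
  assumes A: "A \<in> carrier_mat n n"
  shows "poly_mat (p + q) A = poly_mat p A + poly_mat q A"
proof (rule eq_matI)
  fix i j assume "i < dim_row (poly_mat p A + poly_mat q A)" "j < dim_col (poly_mat p A + poly_mat q A)"
  then have ij: "i < n" "j < n" using A by auto
  define N where "N = Suc (degree p + degree q)"
  have "degree (p + q) < N" "degree p < N" "degree q < N"
    using degree_add_le_max[of p q] by (auto simp: N_def)
  then show "poly_mat (p + q) A $$ (i, j) = (poly_mat p A + poly_mat q A) $$ (i, j)"
    using A ij by (simp add: index_poly_mat[OF A ij] sum.distrib distrib_right)
qed (use A in auto)

lemma poly_mat_smult:
  assumes A: "A \<in> carrier_mat n n"
  shows "poly_mat (Polynomial.smult c p) A = c \<cdot>\<^sub>m poly_mat p A"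
proof (rule eq_matI)
  fix i j assume "i < dim_row (c \<cdot>\<^sub>m poly_mat p A)" "j < dim_col (c \<cdot>\<^sub>m poly_mat p A)"
  then have ij: "i < n" "j < n" using A by auto
  have d: "degree (Polynomial.smult c p) < Suc (degree p)" "degree p < Suc (degree p)"
    using degree_smult_le[of c p] by auto
  have "poly_mat (Polynomial.smult c p) A $$ (i, j)
      = c * (\<Sum>k<Suc (degree p). coeff p k * (A ^\<^sub>m k) $$ (i, j))"
    by (simp add: index_poly_mat[OF A ij d(1)] sum_distrib_left mult.assoc del: sum.lessThan_Suc)
  then show "poly_mat (Polynomial.smult c p) A $$ (i, j) = (c \<cdot>\<^sub>m poly_mat p A) $$ (i, j)"
    using A ij by (simp add: index_poly_mat[OF A ij d(2)] del: sum.lessThan_Suc)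
qed (use A in auto)

lemma poly_mat_pCons:
  assumes A: "A \<in> carrier_mat n n"
  shows "poly_mat (pCons a p) A = a \<cdot>\<^sub>m 1\<^sub>m n + A * poly_mat p A"
proof (rule eq_matI)
  fix i j assume "i < dim_row (a \<cdot>\<^sub>m 1\<^sub>m n + A * poly_mat p A)"
    "j < dim_col (a \<cdot>\<^sub>m 1\<^sub>m n + A * poly_mat p A)"
  then have ij: "i < n" "j < n" using A by auto
  define N where "N = Suc (degree p)"
  have d: "degree (pCons a p) < Suc N" "degree p < N"
    using degree_pCons_le[of a p] by (auto simp: N_def)
  have Suc_entry: "(A ^\<^sub>m Suc k) $$ (i, j) = (\<Sum>l<n. A $$ (i, l) * (A ^\<^sub>m k) $$ (l, j))" for k
    unfolding pow_mat_Suc_left[OF A] by (rule index_mult_mat_sum[OF A pow_carrier_mat[OF A] ij])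
  have "poly_mat (pCons a p) A $$ (i, j) = (\<Sum>k<Suc N. coeff (pCons a p) k * (A ^\<^sub>m k) $$ (i, j))"
    by (rule index_poly_mat[OF A ij d(1)])
  also have "\<dots> = a * 1\<^sub>m n $$ (i, j) + (\<Sum>k<N. coeff p k * (A ^\<^sub>m Suc k) $$ (i, j))"
    using A ij by (subst sum.lessThan_Suc_shift) simp
  also have "(\<Sum>k<N. coeff p k * (A ^\<^sub>m Suc k) $$ (i, j))
      = (\<Sum>l<n. A $$ (i, l) * (\<Sum>k<N. coeff p k * (A ^\<^sub>m k) $$ (l, j)))"
    unfolding Suc_entry sum_distrib_left by (subst sum.swap) (simp add: mult_ac)
  also have "\<dots> = (A * poly_mat p A) $$ (i, j)"
    using ij by (simp add: index_mult_mat_sum[OF A poly_mat_carrier[OF A] ij] index_poly_mat[OF A _ _ d(2)]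
        del: index_mult_mat)
  finally show "poly_mat (pCons a p) A $$ (i, j) = (a \<cdot>\<^sub>m 1\<^sub>m n + A * poly_mat p A) $$ (i, j)"
    using A ij by simp
qed (use A in auto)

lemma poly_mat_pCons_0:
  assumes A: "A \<in> carrier_mat n n"
  shows "poly_mat (pCons 0 p) A = A * poly_mat p A"
  unfolding poly_mat_pCons[OF A] using A by (intro eq_matI) auto

lemma poly_mat_mult:
  assumes A: "A \<in> carrier_mat n n"
  shows "poly_mat (p * q) A = poly_mat p A * poly_mat q A"
proof (induction p)
  case 0
  show ?case using A by (simp add: poly_mat_0 left_mult_zero_mat[of _ n])
next
  case (pCons a p)
  have "poly_mat (pCons a p * q) A = a \<cdot>\<^sub>m poly_mat q A + A * (poly_mat p A * poly_mat q A)"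
    using A by (simp add: mult_pCons_left poly_mat_add poly_mat_smult poly_mat_pCons_0 pCons.IH)
  also have "\<dots> = poly_mat (pCons a p) A * poly_mat q A"
    using A by (simp add: poly_mat_pCons add_mult_distrib_mat[of _ n n _ _ n]
        assoc_mult_mat[of _ n n _ n _ n] mult_smult_assoc_mat[of _ n n _ n])
  finally show ?case .
qed

lemma poly_mat_monom:
  assumes A: "A \<in> carrier_mat n n"
  shows "poly_mat (monom 1 k) A = A ^\<^sub>m k"
proof (rule eq_matI)
  fix i j assume "i < dim_row (A ^\<^sub>m k)" "j < dim_col (A ^\<^sub>m k)"
  then have ij: "i < n" "j < n" using A by (auto split: if_splits)
  have "degree (monom (1::'a) k) < Suc k" by (simp add: degree_monom_eq)
  then show "poly_mat (monom 1 k) A $$ (i, j) = (A ^\<^sub>m k) $$ (i, j)"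
    by (simp add: index_poly_mat[OF A ij] coeff_monom if_distrib cong: if_cong)
qed (use A in auto)

lemma transpose_poly_mat:
  assumes A: "A \<in> carrier_mat n n"
  shows "transpose_mat (poly_mat p A) = poly_mat p (transpose_mat A)"
  using A by (intro eq_matI) (auto simp: poly_mat_def transpose_pow_mat[OF A, symmetric])

lemma poly_mat_mult_eigenvector:
  fixes A :: "'a::field mat"
  assumes A: "A \<in> carrier_mat n n" and v: "v \<in> carrier_vec n" and ev: "A *\<^sub>v v = \<mu> \<cdot>\<^sub>v v"
  shows "poly_mat p A *\<^sub>v v = poly p \<mu> \<cdot>\<^sub>v v"
proof (induction p)
  case 0
  show ?case using A v by (intro eq_vecI) (auto simp: poly_mat_0)
next
  case (pCons a p)
  have "poly_mat (pCons a p) A *\<^sub>v v = a \<cdot>\<^sub>v v + A *\<^sub>v (poly p \<mu> \<cdot>\<^sub>v v)"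
    using A v by (simp add: poly_mat_pCons add_mult_distrib_mat_vec[of _ n n] assoc_mult_mat_vec[of _ n n _ n]
        pCons.IH smult_mult_mat_vec[of _ n n])
  also have "\<dots> = poly (pCons a p) \<mu> \<cdot>\<^sub>v v"
    using A v ev by (simp add: mult_mat_vec[OF A v] add_smult_distrib_vec smult_smult_assoc mult.commute)
  finally show ?case .
qed

lemma mat_trace_poly_mat:
  assumes A: "A \<in> carrier_mat n n" and tr: "\<And>k. mat_trace (A ^\<^sub>m k) = (\<Sum>e\<in>#S. e ^ k)"
  shows "mat_trace (poly_mat p A) = (\<Sum>e\<in>#S. poly p e)"
proof -
  let ?N = "Suc (degree p)"
  have "mat_trace (poly_mat p A) = (\<Sum>i<n. \<Sum>k<?N. coeff p k * (A ^\<^sub>m k) $$ (i, i))"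
    unfolding mat_trace_def using A
    by (intro sum.cong) (simp_all add: index_poly_mat[OF A _ _ lessI] del: sum.lessThan_Suc)
  also have "\<dots> = (\<Sum>k<?N. coeff p k * (\<Sum>e\<in>#S. e ^ k))"
    using A by (subst sum.swap)
      (simp add: tr[unfolded mat_trace_def, symmetric] sum_distrib_left del: sum.lessThan_Suc)
  also have "\<dots> = (\<Sum>e\<in>#S. poly p e)"
    by (induction S) (simp_all add: sum.distrib distrib_left poly_altdef lessThan_Suc_atMost)
  finally show ?thesis .
qed

lemma mat_trace_mult_transpose_eq_0:
  fixes M :: "real mat"
  assumes M: "M \<in> carrier_mat n m" and tr: "mat_trace (M * transpose_mat M) = 0"
  shows "M = 0\<^sub>m n m"
proof -
  have Mt: "transpose_mat M \<in> carrier_mat m n"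
    using M by simp
  have "mat_trace (M * transpose_mat M) = (\<Sum>i<n. \<Sum>j<m. M $$ (i, j) * M $$ (i, j))"
    unfolding mat_trace_def using M by (intro sum.cong) (simp_all add: index_mult_mat_sum[OF M Mt] del: index_mult_mat(1))
  then have "\<forall>i<n. \<forall>j<m. M $$ (i, j) * M $$ (i, j) = 0"
    using tr by (simp add: sum_nonneg_eq_0_iff sum_nonneg)
  then show ?thesis
    using M by (intro eq_matI) auto
qed

lemma proots_prod_linear_factors: "proots (\<Prod>r\<leftarrow>rs. [:- r, 1:]) = mset (rs :: 'a::idom list)"
proof (induction rs)
  case (Cons r rs)
  have "(\<Prod>a\<leftarrow>rs. [:- a, 1:]) \<noteq> (0 :: 'a poly)"
    by (auto simp: prod_list_zero_iff)
  then show ?case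
    using Cons.IH proots_linear_factor[of "- r"] by (simp add: proots_mult del: mult_pCons_left)
qed simp

lemma real_symmetric_size_proots_char_poly:
  fixes A :: "real mat"
  assumes A: "A \<in> carrier_mat n n" and sym: "transpose_mat A = A"
  shows "size (proots (char_poly A)) = n"
proof -
  obtain rs where rs: "char_poly A = (\<Prod>r\<leftarrow>rs. [:- r, 1:])"
    using real_symmetric_char_poly_splits[OF A sym] .
  have "length rs = n"
    using degree_monic_char_poly[OF A] degree_linear_factors[of uminus rs] by (simp add: rs)
  then show ?thesis
    by (simp add: rs proots_prod_linear_factors)
qed

lemma real_symmetric_mat_trace_pow:
  fixes A :: "real mat"
  assumes A: "A \<in> carrier_mat n n" and sym: "transpose_mat A = A"
  shows "mat_trace (A ^\<^sub>m k) = (\<Sum>e\<in>#proots (char_poly A). e ^ k)"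
proof -
  obtain rs where rs: "char_poly A = (\<Prod>r\<leftarrow>rs. [:- r, 1:])"
    using real_symmetric_char_poly_splits[OF A sym] .
  show ?thesis
    unfolding mat_trace_pow_char_poly_roots[OF A rs] rs proots_prod_linear_factors
    by (simp only: mset_map[symmetric] sum_mset_sum_list)
qed

text \<open>With \<open>M = q(A)\<close> symmetric, \<open>tr (M M\<^sup>T) = tr (q\<^sup>2(A))\<close> is the sum of \<open>q(\<lambda>)\<^sup>2\<close> over the
  eigenvalues, which vanishes.\<close>

lemma real_symmetric_poly_mat_eq_0:
  fixes A :: "real mat"
  assumes A: "A \<in> carrier_mat n n" and sym: "transpose_mat A = A"
    and q: "\<And>t. t \<in># proots (char_poly A) \<Longrightarrow> poly q t = 0"
  shows "poly_mat q A = 0\<^sub>m n n"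
proof (rule mat_trace_mult_transpose_eq_0)
  show "poly_mat q A \<in> carrier_mat n n"
    using A by simp
  have "mat_trace (poly_mat q A * transpose_mat (poly_mat q A)) = mat_trace (poly_mat (q * q) A)"
    by (simp add: transpose_poly_mat[OF A] sym poly_mat_mult[OF A])
  also have "\<dots> = (\<Sum>t\<in>#proots (char_poly A). poly (q * q) t)"
    by (rule mat_trace_poly_mat[OF A real_symmetric_mat_trace_pow[OF A sym]])
  also have "\<dots> = 0"
    using q by (intro sum_mset.neutral) auto
  finally show "mat_trace (poly_mat q A * transpose_mat (poly_mat q A)) = 0" .
qed

lemma real_symmetric_poly_mat_eqI:
  fixes A :: "real mat"
  assumes A: "A \<in> carrier_mat n n" and sym: "transpose_mat A = A"
    and pq: "\<And>t. t \<in># proots (char_poly A) \<Longrightarrow> poly p t = poly q t"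
  shows "poly_mat p A = poly_mat q A"
proof -
  have "poly_mat (p - q) A = 0\<^sub>m n n"
    using pq by (intro real_symmetric_poly_mat_eq_0[OF A sym]) simp
  then have "poly_mat p A = poly_mat q A + 0\<^sub>m n n"
    using poly_mat_add[OF A, of q "p - q"] by simp
  then show ?thesis
    using A by simp
qed

definition lagrange_basis :: "'a::field list \<Rightarrow> 'a \<Rightarrow> 'a poly" where
  "lagrange_basis ms m = (\<Prod>\<nu>\<leftarrow>filter (\<lambda>\<nu>. \<nu> \<noteq> m) ms. Polynomial.smult (1 / (m - \<nu>)) [:- \<nu>, 1:])"

lemma lagrange_basis_Cons:
  "lagrange_basis (a # ms) m =
    (if a = m then lagrange_basis ms m
     else Polynomial.smult (1 / (m - a)) [:- a, 1:] * lagrange_basis ms m)"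
  by (simp add: lagrange_basis_def)

lemma poly_lagrange_basis_self: "poly (lagrange_basis ms m) m = 1"
  by (induction ms) (auto simp: lagrange_basis_def diff_divide_distrib[symmetric])

lemma poly_lagrange_basis_other:
  "m' \<in> set ms \<Longrightarrow> m' \<noteq> m \<Longrightarrow> poly (lagrange_basis ms m) m' = 0"
  by (induction ms) (auto simp: lagrange_basis_def)

lemma degree_lagrange_basis: "degree (lagrange_basis ms m) \<le> length ms"
proof (induction ms)
  case (Cons a ms)
  have "degree (Polynomial.smult (1 / (m - a)) [:- a, 1:]) \<le> 1"
    by (rule order.trans[OF degree_smult_le]) simp
  then show ?case
    unfolding lagrange_basis_Cons
    using Cons.IH degree_mult_le[of "Polynomial.smult (1 / (m - a)) [:- a, 1:]" "lagrange_basis ms m"]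
    by (auto simp del: mult_smult_left)
qed (simp add: lagrange_basis_def)

section \<open>Orthogonal projections onto eigenspaces\<close>

lemma orthogonal_projection_unique:
  fixes P Q :: "real mat" and S :: "real vec set"
  assumes S: "S \<subseteq> carrier_vec n" and S_diff: "\<And>u w. u \<in> S \<Longrightarrow> w \<in> S \<Longrightarrow> u - w \<in> S"
    and P: "P \<in> carrier_mat n n" "\<forall>v \<in> carrier_vec n. P *\<^sub>v v \<in> S \<and> (\<forall>w \<in> S. (v - P *\<^sub>v v) \<bullet> w = 0)"
    and Q: "Q \<in> carrier_mat n n" "\<forall>v \<in> carrier_vec n. Q *\<^sub>v v \<in> S \<and> (\<forall>w \<in> S. (v - Q *\<^sub>v v) \<bullet> w = 0)"
  shows "P = Q"
proof (rule eq_mat_mult_vecI[OF P(1) Q(1)])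
  fix v :: "real vec" assume v: "v \<in> carrier_vec n"
  define u where "u = P *\<^sub>v v - Q *\<^sub>v v"
  have u: "u \<in> S"
    unfolding u_def using S_diff P(2) Q(2) v by blast
  have uc: "u \<in> carrier_vec n" and Pv: "P *\<^sub>v v \<in> carrier_vec n" and Qv: "Q *\<^sub>v v \<in> carrier_vec n"
    using u S P(1) Q(1) v by auto
  have "u = (v - Q *\<^sub>v v) - (v - P *\<^sub>v v)"
    unfolding u_def using v P(1) Q(1) by (intro eq_vecI) auto
  then have "u \<bullet> u = (v - Q *\<^sub>v v) \<bullet> u - (v - P *\<^sub>v v) \<bullet> u"
    using v Pv Qv uc by (simp add: minus_scalar_prod_distrib[of _ n])
  also have "\<dots> = 0"
    using P(2) Q(2) v u by simp
  finally have "u = 0\<^sub>v n"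
    using conjugate_square_eq_0_vec[OF uc] by simp
  show "P *\<^sub>v v = Q *\<^sub>v v"
  proof (rule eq_vecI)
    fix i assume i: "i < dim_vec (Q *\<^sub>v v)"
    then have "u $ i = 0"
      using \<open>u = 0\<^sub>v n\<close> Q(1) by simp
    then show "(P *\<^sub>v v) $ i = (Q *\<^sub>v v) $ i"
      using i Pv Qv by (simp add: u_def)
  qed (use P(1) Q(1) in simp)
qed

lemma finite_verts[simp]: "finite (verts G)"
  by (simp add: verts_def)

lemma adj_mat_dim[simp]: "dim_row (adj_mat G) = fst G" "dim_col (adj_mat G) = fst G"
  by (simp_all add: adj_mat_def)

lemma adj_mat_carrier[simp]: "adj_mat G \<in> carrier_mat (fst G) (fst G)"
  by (simp add: carrier_matI)

lemma index_adj_mat: "i < fst G \<Longrightarrow> j < fst G \<Longrightarrow> adj_mat G $$ (i, j) = (if adj G i j then 1 else 0)"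
  by (simp add: adj_mat_def)

lemma adj_sym: "is_graph G \<Longrightarrow> adj G i j = adj G j i"
  unfolding is_graph_def by blast

lemma transpose_adj_mat: "is_graph G \<Longrightarrow> transpose_mat (adj_mat G) = adj_mat G"
  by (rule eq_matI) (auto simp: adj_mat_def adj_sym)

lemma size_Spec: "is_graph G \<Longrightarrow> size (Spec G) = fst G"
  unfolding Spec_def by (rule real_symmetric_size_proots_char_poly[OF adj_mat_carrier transpose_adj_mat])

lemma mat_trace_pow_adj_mat: "is_graph G \<Longrightarrow> mat_trace (adj_mat G ^\<^sub>m k) = (\<Sum>t\<in>#Spec G. t ^ k)"
  unfolding Spec_def by (rule real_symmetric_mat_trace_pow[OF adj_mat_carrier transpose_adj_mat])

lemma set_distinct_eigs: "set (distinct_eigs G) = set_mset (Spec G)"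
  by (simp add: distinct_eigs_def)

lemma distinct_distinct_eigs[simp]: "distinct (distinct_eigs G)"
  by (simp add: distinct_eigs_def)

lemma length_distinct_eigs: "is_graph G \<Longrightarrow> length (distinct_eigs G) \<le> fst G"
proof -
  obtain xs where xs: "mset xs = Spec G"
    using ex_mset by blast
  have "card (set_mset (Spec G)) \<le> size (Spec G)"
    unfolding xs[symmetric] by (simp add: card_length)
  then show "is_graph G \<Longrightarrow> length (distinct_eigs G) \<le> fst G"
    by (simp add: distinct_eigs_def size_Spec)
qed

lemma eigenspace_diff:
  assumes "u \<in> eigenspace G \<mu>" "w \<in> eigenspace G \<mu>"
  shows "u - w \<in> eigenspace G \<mu>"
proof -
  have "adj_mat G *\<^sub>v (u - w) = \<mu> \<cdot>\<^sub>v (u - w)"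
    using assms by (intro eq_vecI)
      (auto simp: eigenspace_def mult_minus_distrib_mat_vec[OF adj_mat_carrier] right_diff_distrib)
  then show ?thesis
    using assms by (simp add: eigenspace_def)
qed

lemma eig_proj_eqI:
  assumes P: "P \<in> carrier_mat (fst G) (fst G)" "transpose_mat P = P"
    "\<And>v. v \<in> carrier_vec (fst G) \<Longrightarrow> P *\<^sub>v v \<in> eigenspace G \<mu>"
    "\<And>w. w \<in> eigenspace G \<mu> \<Longrightarrow> P *\<^sub>v w = w"
  shows "eig_proj G \<mu> = P"
proof -
  let ?n = "fst G" and ?S = "eigenspace G \<mu>"
  let ?proj = "\<lambda>Q. Q \<in> carrier_mat ?n ?n \<and>
    (\<forall>v \<in> carrier_vec ?n. Q *\<^sub>v v \<in> ?S \<and> (\<forall>w \<in> ?S. (v - Q *\<^sub>v v) \<bullet> w = 0))"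
  have S: "?S \<subseteq> carrier_vec ?n"
    by (auto simp: eigenspace_def)
  have "?proj P"
  proof (intro conjI ballI P(1) P(3))
    fix v w :: "real vec" assume v: "v \<in> carrier_vec ?n" and w: "w \<in> ?S"
    then have wc: "w \<in> carrier_vec ?n"
      using S by auto
    have "(P *\<^sub>v v) \<bullet> w = v \<bullet> (P *\<^sub>v w)"
      using transpose_vec_mult_scalar[OF P(1) wc v] P(2) by simp
    then show "(v - P *\<^sub>v v) \<bullet> w = 0"
      using P(1,4) w v wc by (simp add: minus_scalar_prod_distrib[of _ ?n])
  qed
  moreover have "Q = P" if "?proj Q" for Q
    using orthogonal_projection_unique[OF S eigenspace_diff, of Q P] that \<open>?proj P\<close> by blast
  ultimately show ?thesis
    unfolding eig_proj_def by (rule the_equality)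
qed

text \<open>\<open>(X - \<mu>) L\<^sub>\<mu>\<close> vanishes on the spectrum, so \<open>L\<^sub>\<mu>(A)\<close> maps into the eigenspace of \<open>\<mu>\<close>.\<close>

lemma adj_mat_mult_poly_mat_lagrange_basis:
  assumes G: "is_graph G" and \<mu>: "\<mu> \<in> set (distinct_eigs G)"
  defines "P \<equiv> poly_mat (lagrange_basis (distinct_eigs G) \<mu>) (adj_mat G)"
  shows "adj_mat G * P = \<mu> \<cdot>\<^sub>m P"
proof -
  let ?A = "adj_mat G" and ?n = "fst G"
  let ?L = "lagrange_basis (distinct_eigs G) \<mu>"
  have A: "?A \<in> carrier_mat ?n ?n" and sym: "transpose_mat ?A = ?A"
    by (simp_all add: transpose_adj_mat[OF G])
  have "?A * P = poly_mat (pCons 0 ?L) ?A"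
    unfolding P_def by (rule poly_mat_pCons_0[OF A, symmetric])
  also have "\<dots> = poly_mat (Polynomial.smult \<mu> ?L) ?A"
  proof (rule real_symmetric_poly_mat_eqI[OF A sym])
    fix t assume "t \<in># proots (char_poly ?A)"
    then have "t \<in> set (distinct_eigs G)"
      by (simp add: set_distinct_eigs Spec_def)
    then show "poly (pCons 0 ?L) t = poly (Polynomial.smult \<mu> ?L) t"
      by (cases "t = \<mu>") (simp_all add: poly_lagrange_basis_other)
  qed
  also have "\<dots> = \<mu> \<cdot>\<^sub>m P"
    unfolding P_def by (rule poly_mat_smult[OF A])
  finally show ?thesis .
qed

lemma eig_proj_eq_poly_mat:
  assumes G: "is_graph G" and \<mu>: "\<mu> \<in> set (distinct_eigs G)"
  shows "eig_proj G \<mu> = poly_mat (lagrange_basis (distinct_eigs G) \<mu>) (adj_mat G)"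
proof (rule eig_proj_eqI)
  let ?A = "adj_mat G" and ?n = "fst G"
  let ?P = "poly_mat (lagrange_basis (distinct_eigs G) \<mu>) ?A"
  have A: "?A \<in> carrier_mat ?n ?n"
    by simp
  show P: "?P \<in> carrier_mat ?n ?n"
    by simp
  show "transpose_mat ?P = ?P"
    by (simp add: transpose_poly_mat[OF A] transpose_adj_mat[OF G])
  fix v :: "real vec" assume v: "v \<in> carrier_vec ?n"
  have "?A *\<^sub>v (?P *\<^sub>v v) = \<mu> \<cdot>\<^sub>v (?P *\<^sub>v v)"
    using A P v adj_mat_mult_poly_mat_lagrange_basis[OF G \<mu>]
    by (simp add: assoc_mult_mat_vec[symmetric, of _ ?n ?n _ ?n] smult_mult_mat_vec[OF P v])
  then show "?P *\<^sub>v v \<in> eigenspace G \<mu>"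
    using mult_mat_vec_carrier[OF P v] by (simp add: eigenspace_def)
next
  fix w assume "w \<in> eigenspace G \<mu>"
  then show "poly_mat (lagrange_basis (distinct_eigs G) \<mu>) (adj_mat G) *\<^sub>v w = w"
    unfolding eigenspace_def
    by (auto simp: poly_mat_mult_eigenvector[OF adj_mat_carrier] poly_lagrange_basis_self)
qed

lemma index_poly_mat_sum:
  assumes A: "A \<in> carrier_mat n n" and ij: "i < n" "j < n" and I: "finite I"
  shows "poly_mat (\<Sum>x\<in>I. f x) A $$ (i, j) = (\<Sum>x\<in>I. poly_mat (f x) A $$ (i, j))"
  using I A by (induction I rule: finite_induct) (simp_all add: poly_mat_0[OF A] poly_mat_add[OF A] ij)

lemma pow_adj_mat_spectral_decomposition:
  assumes G: "is_graph G" and xy: "x < fst G" "y < fst G"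
  shows "(adj_mat G ^\<^sub>m k) $$ (x, y) = (\<Sum>\<mu>\<in>set_mset (Spec G). \<mu> ^ k * eig_proj G \<mu> $$ (x, y))"
proof -
  let ?A = "adj_mat G" and ?n = "fst G" and ?ms = "distinct_eigs G" and ?E = "set_mset (Spec G)"
  have A: "?A \<in> carrier_mat ?n ?n" and sym: "transpose_mat ?A = ?A"
    by (simp_all add: transpose_adj_mat[OF G])
  define R where "R = (\<Sum>\<mu>\<in>?E. Polynomial.smult (\<mu> ^ k) (lagrange_basis ?ms \<mu>))"
  have "poly_mat (monom 1 k) ?A = poly_mat R ?A"
  proof (rule real_symmetric_poly_mat_eqI[OF A sym])
    fix t assume "t \<in># proots (char_poly ?A)"
    then have t: "t \<in> ?E"
      by (simp add: Spec_def)
    have "poly R t = (\<Sum>\<mu>\<in>?E. \<mu> ^ k * poly (lagrange_basis ?ms \<mu>) t)"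
      by (simp add: R_def poly_sum)
    also have "\<dots> = t ^ k"
      using t by (subst sum.remove[of _ t])
        (auto simp: poly_lagrange_basis_self poly_lagrange_basis_other set_distinct_eigs intro!: sum.neutral)
    finally show "poly (monom 1 k) t = poly R t"
      by (simp add: poly_monom)
  qed
  then have "(?A ^\<^sub>m k) $$ (x, y) = poly_mat R ?A $$ (x, y)"
    by (simp add: poly_mat_monom[OF A])
  also have "\<dots> = (\<Sum>\<mu>\<in>?E. \<mu> ^ k * poly_mat (lagrange_basis ?ms \<mu>) ?A $$ (x, y))"
    unfolding R_def using xy A by (simp add: index_poly_mat_sum[OF A xy] poly_mat_smult[OF A])
  also have "\<dots> = (\<Sum>\<mu>\<in>?E. \<mu> ^ k * eig_proj G \<mu> $$ (x, y))"
    by (intro sum.cong refl) (simp add: eig_proj_eq_poly_mat[OF G] set_distinct_eigs)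
  finally show ?thesis .
qed

section \<open>Walks\<close>

lemma finite_walks: "finite (walks G k x y)"
proof (rule finite_subset)
  show "walks G k x y \<subseteq> {p. set p \<subseteq> verts G \<and> length p = Suc k}"
    unfolding walks_def by auto
  show "finite {p. set p \<subseteq> verts G \<and> length p = Suc k}"
    by (rule finite_lists_length_eq) simp
qed

lemma walks_0: "walks G 0 x y = (if x = y \<and> x \<in> verts G then {[x]} else {})"
proof -
  have "p \<in> walks G 0 x y \<longleftrightarrow> x = y \<and> x \<in> verts G \<and> p = [x]" for p
  proof
    assume "p \<in> walks G 0 x y"
    then have "length p = 1" "p ! 0 = x" "p ! 0 = y" "set p \<subseteq> verts G"
      by (auto simp: walks_def)
    then show "x = y \<and> x \<in> verts G \<and> p = [x]"
      by (cases p) auto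
  qed (auto simp: walks_def)
  then show ?thesis
    by auto
qed

lemma walks_Suc:
  assumes y: "y \<in> verts G"
  shows "walks G (Suc k) x y = (\<Union>z\<in>{z \<in> verts G. adj G z y}. (\<lambda>p. p @ [y]) ` walks G k x z)"
proof (intro equalityI subsetI)
  fix p assume "p \<in> walks G (Suc k) x y"
  then have len: "length p = Suc (Suc k)" and p0: "p ! 0 = x" and pk: "p ! Suc k = y"
    and ps: "set p \<subseteq> verts G" and pa: "\<forall>i<Suc k. adj G (p ! i) (p ! Suc i)"
    by (auto simp: walks_def)
  define q where "q = butlast p"
  have pq: "p = q @ [y]"
    using len pk unfolding q_def by (metis append_butlast_last_id diff_Suc_1 last_conv_nth list.size(3) nat.distinct(1))
  have lq: "length q = Suc k"
    using len q_def by simp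
  have qi: "\<And>i. i < Suc k \<Longrightarrow> q ! i = p ! i"
    using pq lq by (simp add: nth_append)
  have "q \<in> walks G k x (p ! k)"
    unfolding walks_def using lq qi p0 ps pa pq by auto
  moreover have "p ! k \<in> verts G"
    using len ps nth_mem[of k p] by auto
  moreover have "adj G (p ! k) y"
    using pa pk by auto
  ultimately show "p \<in> (\<Union>z\<in>{z \<in> verts G. adj G z y}. (\<lambda>p. p @ [y]) ` walks G k x z)"
    using pq by blast
next
  fix p assume "p \<in> (\<Union>z\<in>{z \<in> verts G. adj G z y}. (\<lambda>p. p @ [y]) ` walks G k x z)"
  then obtain z q where z: "z \<in> verts G" "adj G z y" and q: "q \<in> walks G k x z" and pq: "p = q @ [y]"
    by auto
  from q have lq: "length q = Suc k" and qk: "q ! k = z"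
    and qa: "\<forall>i<k. adj G (q ! i) (q ! Suc i)"
    by (auto simp: walks_def)
  have "adj G (p ! i) (p ! Suc i)" if "i < Suc k" for i
    using that qa pq lq qk z by (cases "i < k") (auto simp: nth_append less_Suc_eq)
  then show "p \<in> walks G (Suc k) x y"
    using q pq lq y by (auto simp: walks_def nth_append)
qed

lemma num_walks_0: "num_walks G 0 x y = (if x = y \<and> x \<in> verts G then 1 else 0)"
  by (auto simp: num_walks_def walks_0)

lemma num_walks_Suc:
  assumes y: "y \<in> verts G"
  shows "num_walks G (Suc k) x y = (\<Sum>z\<in>{z \<in> verts G. adj G z y}. num_walks G k x z)"
proof -
  have "num_walks G (Suc k) x y = (\<Sum>z\<in>{z \<in> verts G. adj G z y}. card ((\<lambda>p. p @ [y]) ` walks G k x z))"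
    unfolding num_walks_def walks_Suc[OF y] using finite_walks
    by (intro card_UN_disjoint) (auto simp: walks_def)
  also have "\<dots> = (\<Sum>z\<in>{z \<in> verts G. adj G z y}. num_walks G k x z)"
    by (intro sum.cong refl) (simp add: num_walks_def card_image inj_on_def)
  finally show ?thesis .
qed

lemma pow_adj_mat_num_walks:
  assumes x: "x < fst G" and y: "y < fst G"
  shows "(adj_mat G ^\<^sub>m k) $$ (x, y) = real (num_walks G k x y)"
  using y
proof (induction k arbitrary: y)
  case 0
  then show ?case
    using x by (simp add: num_walks_0 verts_def)
next
  case (Suc k)
  let ?A = "adj_mat G"
  have "(?A ^\<^sub>m Suc k) $$ (x, y) = (\<Sum>l<fst G. (?A ^\<^sub>m k) $$ (x, l) * ?A $$ (l, y))"
    unfolding pow_mat.simps(2)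
    by (rule index_mult_mat_sum[OF pow_carrier_mat[OF adj_mat_carrier] adj_mat_carrier x Suc.prems])
  also have "\<dots> = (\<Sum>l<fst G. if adj G l y then real (num_walks G k x l) else 0)"
    using Suc.IH Suc.prems by (intro sum.cong refl) (simp add: index_adj_mat)
  also have "\<dots> = (\<Sum>l\<in>{z \<in> verts G. adj G z y}. real (num_walks G k x l))"
    by (simp only: sum.inter_filter[symmetric] verts_def lessThan_atLeast0 finite_atLeastLessThan)
  also have "\<dots> = real (num_walks G (Suc k) x y)"
    using Suc.prems by (simp add: num_walks_Suc verts_def)
  finally show ?case .
qed

lemma num_walks_sym:
  assumes G: "is_graph G" and x: "x < fst G" and y: "y < fst G"
  shows "num_walks G k x y = num_walks G k y x"
proof -
  let ?A = "adj_mat G"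
  have "(?A ^\<^sub>m k) $$ (y, x) = transpose_mat (?A ^\<^sub>m k) $$ (x, y)"
    using x y by simp
  also have "\<dots> = (?A ^\<^sub>m k) $$ (x, y)"
    by (simp add: transpose_pow_mat[OF adj_mat_carrier] transpose_adj_mat[OF G])
  finally show ?thesis
    by (simp add: pow_adj_mat_num_walks x y)
qed

lemma num_walks_add:
  assumes G: "is_graph G" and x: "x < fst G"
  shows "num_walks G (j + l) x x = (\<Sum>y\<in>verts G. num_walks G j x y * num_walks G l x y)"
proof -
  let ?A = "adj_mat G" and ?n = "fst G"
  have "real (num_walks G (j + l) x x) = (?A ^\<^sub>m j * ?A ^\<^sub>m l) $$ (x, x)"
    by (simp add: pow_adj_mat_num_walks[OF x x, symmetric] pow_mat_add[OF adj_mat_carrier])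
  also have "\<dots> = (\<Sum>y<?n. (?A ^\<^sub>m j) $$ (x, y) * (?A ^\<^sub>m l) $$ (y, x))"
    using x by (intro index_mult_mat_sum) auto
  also have "\<dots> = real (\<Sum>y\<in>verts G. num_walks G j x y * num_walks G l x y)"
    by (simp add: pow_adj_mat_num_walks x num_walks_sym[OF G _ x] verts_def lessThan_atLeast0)
  finally show ?thesis
    by (simp only: of_nat_eq_iff)
qed

lemma power_sum_Spec_closed_walks:
  assumes G: "is_graph G"
  shows "(\<Sum>t\<in>#Spec G. t ^ k) = real (\<Sum>x\<in>verts G. num_walks G k x x)"
  by (simp add: mat_trace_pow_adj_mat[OF G, symmetric] mat_trace_def pow_adj_mat_num_walks
      verts_def lessThan_atLeast0)

lemma image_mset_eq_transfer:
  assumes "image_mset f A = image_mset g B"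
    and "\<And>a b. a \<in># A \<Longrightarrow> b \<in># B \<Longrightarrow> f a = g b \<Longrightarrow> F a = F' b"
  shows "image_mset F A = image_mset F' B"
  using assms
proof (induction A arbitrary: B)
  case (add a A)
  have "f a \<in># image_mset g B"
    using add.prems(1)[symmetric] by simp
  then obtain b where b: "b \<in># B" "g b = f a"
    by auto
  define B' where "B' = B - {#b#}"
  have B: "B = add_mset b B'"
    using b(1) by (simp add: B'_def)
  have "image_mset F A = image_mset F' B'"
    using add.prems b unfolding B by (intro add.IH) auto
  moreover have "F a = F' b"
    using add.prems(2) b B by simp
  ultimately show ?case
    unfolding B by simp
qed simp

lemma sum_mset_poly:
  fixes S :: "'a::comm_ring_1 multiset"
  assumes "degree q < N"
  shows "(\<Sum>t\<in>#S. poly q t) = (\<Sum>k<N. coeff q k * (\<Sum>t\<in>#S. t ^ k))"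
proof -
  have poly_q: "poly q t = (\<Sum>k<N. coeff q k * t ^ k)" for t
    using assms by (auto simp: poly_altdef intro!: sum.mono_neutral_left)
      (metis le_degree mult_zero_left)
  show ?thesis
    by (induction S) (simp_all add: poly_q sum.distrib distrib_left)
qed

text \<open>The polynomial vanishing on all other elements of both multisets has degree at most \<open>2n\<close>
  and isolates the multiplicity of \<open>v\<close>.\<close>

lemma multiset_eq_if_power_sums_eq:
  fixes S T :: "'a::field_char_0 multiset"
  assumes "size S \<le> n" "size T \<le> n"
    and ps: "\<And>k. k \<le> 2 * n \<Longrightarrow> (\<Sum>t\<in>#S. t ^ k) = (\<Sum>t\<in>#T. t ^ k)"
  shows "S = T"
proof (rule multiset_eqI)
  fix v
  define U where "U = (set_mset S \<union> set_mset T) - {v}"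
  define q where "q = (\<Prod>u\<in>U. [:- u, 1:])"
  have card_set: "card (set_mset M) \<le> size M" for M :: "'a multiset"
  proof -
    obtain xs where "mset xs = M"
      using ex_mset by blast
    then show ?thesis
      using card_length[of xs] by auto
  qed
  have "card U \<le> card (set_mset S) + card (set_mset T)"
    unfolding U_def by (rule order.trans[OF card_mono card_Un_le]) auto
  then have "degree q < Suc (2 * n)"
    using degree_prod_sum_le[of U "\<lambda>u. [:- u, 1:]"] card_set[of S] card_set[of T] assms(1,2)
    by (simp add: q_def U_def o_def)
  then have "(\<Sum>t\<in>#S. poly q t) = (\<Sum>t\<in>#T. poly q t)"
    using ps by (simp add: sum_mset_poly)
  moreover have "(\<Sum>t\<in>#M. poly q t) = of_nat (count M v) * poly q v" if "set_mset M - {v} \<subseteq> U" for M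
    using that
  proof (induction M)
    case (add a M)
    have "poly q a = 0" if "a \<noteq> v"
      using add.prems that by (auto simp: q_def poly_prod U_def)
    then show ?case
      using add by (auto simp: algebra_simps)
  qed simp
  ultimately have "of_nat (count S v) * poly q v = (of_nat (count T v) :: 'a) * poly q v"
    unfolding U_def by (metis Diff_mono Un_upper1 Un_upper2 order_refl)
  moreover have "poly q v \<noteq> 0"
    by (simp add: q_def poly_prod U_def)
  ultimately show "count S v = count T v"
    by simp
qed

section \<open>Colour refinement counts walks\<close>

fun init_color :: "color \<Rightarrow> nat" where
  "init_color (Init a) = a"
| "init_color (Refine c M) = init_color c"

lemma init_color_cr_color: "init_color (cr_color G c r x) = c x"
  by (induction r) auto

lemma finite_nbrs[simp]: "finite (nbrs G y)"
  by (simp add: nbrs_def)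

lemma nbrs_eq: "is_graph G \<Longrightarrow> nbrs G y = {z \<in> verts G. adj G z y}"
  unfolding nbrs_def by (auto simp: adj_sym)

lemma cr_color_individualize_num_walks:
  assumes G: "is_graph G" and H: "is_graph H" and x: "x \<in> verts G" and x': "x' \<in> verts H"
    and y: "y \<in> verts G" and y': "y' \<in> verts H"
    and eq: "cr_color G (individualize x) r y = cr_color H (individualize x') r y'" and k: "k \<le> r"
  shows "num_walks G k x y = num_walks H k x' y'"
  using y y' eq k
proof (induction r arbitrary: y y' k)
  case 0
  then have "y = x \<longleftrightarrow> y' = x'"
    by (auto simp: individualize_def split: if_splits)
  with 0 x x' show ?case
    by (auto simp: num_walks_0)
next
  case (Suc r)
  let ?c = "individualize x" and ?c' = "individualize x'"
  from Suc.prems(3) have eq_r: "cr_color G ?c r y = cr_color H ?c' r y'"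
    and nbrs_r: "image_mset (cr_color G ?c r) (mset_set (nbrs G y)) =
      image_mset (cr_color H ?c' r) (mset_set (nbrs H y'))"
    by auto
  show ?case
  proof (cases "k \<le> r")
    case True
    then show ?thesis
      using Suc.IH[OF Suc.prems(1,2) eq_r] by blast
  next
    case False
    then have k: "k = Suc r"
      using Suc.prems(4) by simp
    have "image_mset (num_walks G r x) (mset_set (nbrs G y)) =
      image_mset (num_walks H r x') (mset_set (nbrs H y'))"
      by (rule image_mset_eq_transfer[OF nbrs_r]) (auto intro: Suc.IH simp: nbrs_def)
    then have "(\<Sum>z\<in>nbrs G y. num_walks G r x z) = (\<Sum>z\<in>nbrs H y'. num_walks H r x' z)"
      by (simp add: sum_unfold_sum_mset)
    then show ?thesis
      using k Suc.prems(1,2) by (simp add: num_walks_Suc nbrs_eq[OF G] nbrs_eq[OF H])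
  qed
qed

lemma WL1_col_individualize_root:
  assumes eq: "WL1_col G (individualize x) = WL1_col H (individualize x')"
    and n: "fst G = fst H" and x: "x \<in> verts G" and x': "x' \<in> verts H"
  shows "cr_color G (individualize x) (fst G) x = cr_color H (individualize x') (fst G) x'"
proof -
  have "cr_color G (individualize x) (fst G) x \<in># WL1_col G (individualize x)"
    using x by (simp add: WL1_col_def)
  then obtain y' where y': "y' \<in> verts H"
    and c: "cr_color H (individualize x') (fst G) y' = cr_color G (individualize x) (fst G) x"
    unfolding eq using n by (auto simp: WL1_col_def)
  have "y' = x'"
    using arg_cong[OF c, of init_color]
    by (simp add: init_color_cr_color individualize_def split: if_splits)
  then show ?thesis
    using c by simp
qed

lemma WL1_col_individualize_closed_walks:
  assumes G: "is_graph G" and H: "is_graph H" and n: "fst G = fst H"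
    and x: "x \<in> verts G" and x': "x' \<in> verts H"
    and eq: "WL1_col G (individualize x) = WL1_col H (individualize x')" and k: "k \<le> 2 * fst G"
  shows "num_walks G k x x = num_walks H k x' x'"
proof -
  define j where "j = min k (fst G)"
  define l where "l = k - j"
  have jl: "k = j + l" "j \<le> fst G" "l \<le> fst G"
    using k by (auto simp: j_def l_def)
  have xn: "x < fst G" "x' < fst H"
    using x x' by (auto simp: verts_def)
  have "image_mset (\<lambda>y. num_walks G j x y * num_walks G l x y) (mset_set (verts G)) =
    image_mset (\<lambda>y. num_walks H j x' y * num_walks H l x' y) (mset_set (verts H))"
  proof (rule image_mset_eq_transfer)
    show "image_mset (cr_color G (individualize x) (fst G)) (mset_set (verts G)) =
      image_mset (cr_color H (individualize x') (fst G)) (mset_set (verts H))"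
      using eq n by (simp add: WL1_col_def)
  qed (simp add: cr_color_individualize_num_walks[OF G H x x'] jl)
  then show ?thesis
    unfolding jl(1) num_walks_add[OF G xn(1)] num_walks_add[OF H xn(2)]
    by (simp add: sum_unfold_sum_mset)
qed

lemma eig_proj_num_walks:
  assumes G: "is_graph G" and \<mu>: "\<mu> \<in> set (distinct_eigs G)" and x: "x < fst G" and y: "y < fst G"
  shows "eig_proj G \<mu> $$ (x, y) =
    (\<Sum>k\<le>fst G. coeff (lagrange_basis (distinct_eigs G) \<mu>) k * real (num_walks G k x y))"
proof -
  have d: "degree (lagrange_basis (distinct_eigs G) \<mu>) < Suc (fst G)"
    using degree_lagrange_basis[of "distinct_eigs G" \<mu>] length_distinct_eigs[OF G] by simp
  show ?thesis
    unfolding eig_proj_eq_poly_mat[OF G \<mu>] index_poly_mat[OF adj_mat_carrier x y d] lessThan_Suc_atMost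
    by (simp add: pow_adj_mat_num_walks x y)
qed

lemma Pstar_eq_if_cr_color_eq:
  assumes G: "is_graph G" and H: "is_graph H"
    and ms: "distinct_eigs G = distinct_eigs H" and n: "fst G = fst H"
    and x: "x \<in> verts G" and x': "x' \<in> verts H" and y: "y \<in> verts G" and y': "y' \<in> verts H"
    and eq: "cr_color G (individualize x) (fst G) y = cr_color H (individualize x') (fst G) y'"
  shows "Pstar G x y = Pstar H x' y'"
  unfolding Pstar_def ms[symmetric]
proof (rule map_cong[OF refl])
  fix \<mu> assume \<mu>: "\<mu> \<in> set (distinct_eigs G)"
  then have \<mu>': "\<mu> \<in> set (distinct_eigs H)"
    using ms by simp
  have "num_walks G k x y = num_walks H k x' y'" if "k \<le> fst G" for k
    using cr_color_individualize_num_walks[OF G H x x' y y' eq that] .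
  then show "eig_proj G \<mu> $$ (x, y) = eig_proj H \<mu> $$ (x', y')"
    using x x' y y' n
    by (simp add: eig_proj_num_walks[OF G \<mu>] eig_proj_num_walks[OF H \<mu>'] ms verts_def)
qed

lemma Spec_eq_if_closed_walks_eq:
  assumes G: "is_graph G" and H: "is_graph H" and n: "fst G = fst H"
    and walks: "\<And>k. k \<le> 2 * fst G \<Longrightarrow>
      (\<Sum>x\<in>verts G. num_walks G k x x) = (\<Sum>x\<in>verts H. num_walks H k x x)"
  shows "Spec G = Spec H"
  using size_Spec[OF G] size_Spec[OF H] n walks
  by (intro multiset_eq_if_power_sums_eq[of _ "fst G"]) (simp_all add: power_sum_Spec_closed_walks G H)

theorem F_weak_eq_if_WL_3_2_eq:
  assumes G: "is_graph G" and H: "is_graph H" and wl: "WL_3_2 G = WL_3_2 H"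
  shows "F_weak G = F_weak H"
proof -
  have wl': "image_mset (\<lambda>x. WL1_col G (individualize x)) (mset_set (verts G)) =
    image_mset (\<lambda>x. WL1_col H (individualize x)) (mset_set (verts H))"
    using wl unfolding WL_3_2_def .
  have n: "fst G = fst H"
    using arg_cong[OF wl', of size] by (simp add: verts_def)
  have "image_mset (\<lambda>x. num_walks G k x x) (mset_set (verts G)) =
    image_mset (\<lambda>x. num_walks H k x x) (mset_set (verts H))" if "k \<le> 2 * fst G" for k
    by (rule image_mset_eq_transfer[OF wl']) (simp add: WL1_col_individualize_closed_walks[OF G H n _ _ _ that])
  then have Spec: "Spec G = Spec H"
    by (intro Spec_eq_if_closed_walks_eq[OF G H n]) (simp add: sum_unfold_sum_mset)
  then have ms: "distinct_eigs G = distinct_eigs H"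
    by (simp add: distinct_eigs_def)
  have "image_mset (\<lambda>x. (Pstar G x x, image_mset (Pstar G x) (mset_set (verts G)))) (mset_set (verts G)) =
    image_mset (\<lambda>x. (Pstar H x x, image_mset (Pstar H x) (mset_set (verts H)))) (mset_set (verts H))"
  proof (rule image_mset_eq_transfer[OF wl'])
    fix x x' assume "x \<in># mset_set (verts G)" "x' \<in># mset_set (verts H)"
      and eq: "WL1_col G (individualize x) = WL1_col H (individualize x')"
    then have x: "x \<in> verts G" and x': "x' \<in> verts H"
      by auto
    have colours: "image_mset (cr_color G (individualize x) (fst G)) (mset_set (verts G)) =
      image_mset (cr_color H (individualize x') (fst G)) (mset_set (verts H))"
      using eq n by (simp add: WL1_col_def)
    have "Pstar G x x = Pstar H x' x'"
      using WL1_col_individualize_root[OF eq n x x'] by (rule Pstar_eq_if_cr_color_eq[OF G H ms n x x' x x'])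
    moreover have "image_mset (Pstar G x) (mset_set (verts G)) = image_mset (Pstar H x') (mset_set (verts H))"
      by (rule image_mset_eq_transfer[OF colours]) (simp add: Pstar_eq_if_cr_color_eq[OF G H ms n x x'])
    ultimately show "(Pstar G x x, image_mset (Pstar G x) (mset_set (verts G))) =
      (Pstar H x' x', image_mset (Pstar H x') (mset_set (verts H)))"
      by simp
  qed
  then show ?thesis
    unfolding F_weak_def Spec by simp
qed

lemma W_eq_spectral_sum:
  assumes G: "is_graph G" and x: "x < fst G"
  shows "real (W G x k) = (\<Sum>i<length (distinct_eigs G). (distinct_eigs G ! i) ^ k *
    (\<Sum>l\<in>#image_mset (Pstar G x) (mset_set (verts G)). l ! i))"
proof -
  let ?ms = "distinct_eigs G"
  have "real (W G x k) = (\<Sum>y\<in>verts G. (adj_mat G ^\<^sub>m k) $$ (x, y))"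
    unfolding W_def of_nat_sum using x by (intro sum.cong refl) (simp add: pow_adj_mat_num_walks verts_def)
  also have "\<dots> = (\<Sum>y\<in>verts G. \<Sum>\<mu>\<in>set ?ms. \<mu> ^ k * eig_proj G \<mu> $$ (x, y))"
    using x by (intro sum.cong refl) (simp add: pow_adj_mat_spectral_decomposition[OF G] verts_def set_distinct_eigs)
  also have "\<dots> = (\<Sum>\<mu>\<in>set ?ms. \<mu> ^ k * (\<Sum>y\<in>verts G. eig_proj G \<mu> $$ (x, y)))"
    by (subst sum.swap) (simp add: sum_distrib_left)
  also have "\<dots> = (\<Sum>i<length ?ms. (?ms ! i) ^ k * (\<Sum>y\<in>verts G. eig_proj G (?ms ! i) $$ (x, y)))"
    by (simp add: sum_list_distinct_conv_sum_set[symmetric] sum_list_sum_nth atLeast0LessThan)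
  also have "\<dots> = (\<Sum>i<length ?ms. (?ms ! i) ^ k *
      (\<Sum>l\<in>#image_mset (Pstar G x) (mset_set (verts G)). l ! i))"
    by (intro sum.cong refl) (simp add: Pstar_def sum_unfold_sum_mset image_mset.compositionality o_def)
  finally show ?thesis .
qed

theorem WM_eq_if_F_weak_eq:
  assumes G: "is_graph G" and H: "is_graph H" and F: "F_weak G = F_weak H"
  shows "WM G = WM H"
proof -
  have Spec: "Spec G = Spec H" and rows:
    "image_mset (\<lambda>x. (Pstar G x x, image_mset (Pstar G x) (mset_set (verts G)))) (mset_set (verts G)) =
     image_mset (\<lambda>x. (Pstar H x x, image_mset (Pstar H x) (mset_set (verts H)))) (mset_set (verts H))"
    using F unfolding F_weak_def by simp_all
  have n: "fst G = fst H"
    using arg_cong[OF rows, of size] by (simp add: verts_def)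
  have ms: "distinct_eigs G = distinct_eigs H"
    using Spec by (simp add: distinct_eigs_def)
  show ?thesis
    unfolding WM_def
  proof (rule image_mset_eq_transfer[OF rows])
    fix x x' assume "x \<in># mset_set (verts G)" "x' \<in># mset_set (verts H)"
      and eq: "(Pstar G x x, image_mset (Pstar G x) (mset_set (verts G))) =
        (Pstar H x' x', image_mset (Pstar H x') (mset_set (verts H)))"
    then have "x < fst G" "x' < fst H"
      by (auto simp: verts_def)
    then have "W G x k = W H x' k" for k
      using W_eq_spectral_sum[OF G, of x k] W_eq_spectral_sum[OF H, of x' k] eq ms by simp
    then show "map (W G x) [0..<fst G] = map (W H x') [0..<fst H]"
      using n by simp
  qed
qed

theorem corollary4p5:
  shows "\<forall>G H. is_graph G \<and> is_graph H \<longrightarrow>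
           (WL_3_2 G = WL_3_2 H \<longrightarrow> F_weak G = F_weak H) \<and>
           (F_weak G = F_weak H \<longrightarrow> WM G = WM H)"
  using F_weak_eq_if_WL_3_2_eq WM_eq_if_F_weak_eq by blast

end
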